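(* Let $A$ be a distributive meet-complemented lattice in which $\Box x$ and $\Diamond x$ exist for every $x\in A$. Then for all $a,b\in A$: (D1) $\Diamond a\wedge\Box b\le\Diamond(a\wedge b)$ and (D2) $\Box(a\vee b)\le\Box a\vee\Diamond b$.
   Context: A meet-complemented lattice is a lattice $(L,\le)$ such that for every $a\in L$ the element $\neg a=\max\{b\in L: a\wedge b\le c\ \text{for all } c\in L\}$ exists; it is bounded with bottom $0$ and top $1$. For $a\in L$, $\Box a=\max\{b\in L: a\vee\neg b=1\}$ and $\Diamond a=\min\{b\in L: \neg a\vee b=1\}$. *)

theory Defs
  imports Main
begin

definition is_greatest :: "'a::order set \<Rightarrow> 'a \<Rightarrow> bool" where
  "is_greatest S m \<longleftrightarrow> m \<in> S \<and> (\<forall>x\<in>S. x \<le> m)"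

definition is_least :: "'a::order set \<Rightarrow> 'a \<Rightarrow> bool" where
  "is_least S m \<longleftrightarrow> m \<in> S \<and> (\<forall>x\<in>S. m \<le> x)"

definition mc_set :: "'a::lattice \<Rightarrow> 'a set" where
  "mc_set a = {b. \<forall>c. inf a b \<le> c}"

definition meet_complemented :: "'a::lattice itself \<Rightarrow> bool" where
  "meet_complemented _ \<longleftrightarrow> (\<forall>a::'a. \<exists>m. is_greatest (mc_set a) m)"

definition mneg :: "'a::lattice \<Rightarrow> 'a" where
  "mneg a = (THE m. is_greatest (mc_set a) m)"

definition box_set :: "'a::bounded_lattice \<Rightarrow> 'a set" where
  "box_set a = {b. sup a (mneg b) = top}"

definition dia_set :: "'a::bounded_lattice \<Rightarrow> 'a set" where
  "dia_set a = {b. sup (mneg a) b = top}"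

definition mbox :: "'a::bounded_lattice \<Rightarrow> 'a" where
  "mbox a = (THE m. is_greatest (box_set a) m)"

definition mdia :: "'a::bounded_lattice \<Rightarrow> 'a" where
  "mdia a = (THE m. is_least (dia_set a) m)"

end

theory Submission
  imports Defs
begin

text \<open>Both inequalities come from the two defining properties of the operators:
  \<open>\<not>x \<or> \<Diamond>x = 1\<close> with \<open>\<Diamond>x\<close> least such, and \<open>x \<or> \<not>\<Box>x = 1\<close> with \<open>\<Box>x\<close> greatest such.
  For (D1), distributivity turns \<open>(\<not>(a \<and> b) \<or> \<Diamond>(a \<and> b)) \<and> (b \<or> \<not>\<Box>b) = 1\<close>
  into \<open>\<not>a \<or> \<Diamond>(a \<and> b) \<or> \<not>\<Box>b = 1\<close>, since \<open>\<not>(a \<and> b) \<and> b \<le> \<not>a\<close>; hence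
  \<open>\<Diamond>a \<le> \<Diamond>(a \<and> b) \<or> \<not>\<Box>b\<close>, and meeting with \<open>\<Box>b\<close> removes the last term.
  For (D2), \<open>a \<or> \<not>(\<Box>(a \<or> b) \<and> \<not>b) = 1\<close> gives \<open>\<Box>(a \<or> b) \<and> \<not>b \<le> \<Box>a\<close>, and then
  \<open>\<Box>(a \<or> b) = \<Box>(a \<or> b) \<and> (\<not>b \<or> \<Diamond>b) \<le> \<Box>a \<or> \<Diamond>b\<close>.\<close>

lemma is_greatest_The: "\<exists>m. is_greatest S m \<Longrightarrow> is_greatest S (THE m. is_greatest S m)"
  by (rule theI') (auto simp: is_greatest_def intro: order.antisym)

lemma is_least_The: "\<exists>m. is_least S m \<Longrightarrow> is_least S (THE m. is_least S m)"
  by (rule theI') (auto simp: is_least_def intro: order.antisym)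

lemma le_mneg_iff:
  fixes a x :: "'a::bounded_lattice"
  assumes "meet_complemented TYPE('a)"
  shows "x \<le> mneg a \<longleftrightarrow> inf a x = bot"
proof -
  have "is_greatest (mc_set a) (mneg a)"
    using assms unfolding meet_complemented_def mneg_def by (blast intro: is_greatest_The)
  then have "inf a (mneg a) \<le> bot" and greatest: "\<And>y. inf a y = bot \<Longrightarrow> y \<le> mneg a"
    unfolding is_greatest_def mc_set_def by (auto simp del: le_bot) (metis bot_least)
  then have inf_mneg: "inf a (mneg a) = bot"
    by (simp add: bot_unique)
  show ?thesis
  proof
    assume "x \<le> mneg a"
    then have "inf a x \<le> inf a (mneg a)" by (simp add: inf.coboundedI2)
    then show "inf a x = bot" using inf_mneg by (simp add: bot_unique)
  qed (rule greatest)
qed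

lemma inf_mneg_self:
  fixes a :: "'a::bounded_lattice"
  assumes "meet_complemented TYPE('a)"
  shows "inf a (mneg a) = bot"
  using le_mneg_iff[OF assms] by blast

lemma sup_mneg_mbox:
  assumes "\<exists>m. is_greatest (box_set x) m"
  shows "sup x (mneg (mbox x)) = top"
  using is_greatest_The[OF assms] by (simp add: mbox_def is_greatest_def box_set_def)

lemma le_mboxI:
  assumes "\<exists>m. is_greatest (box_set x) m" and "sup x (mneg y) = top"
  shows "y \<le> mbox x"
  using is_greatest_The[OF assms(1)] assms(2) by (simp add: mbox_def is_greatest_def box_set_def)

lemma mneg_sup_mdia:
  assumes "\<exists>m. is_least (dia_set x) m"
  shows "sup (mneg x) (mdia x) = top"
  using is_least_The[OF assms] by (simp add: mdia_def is_least_def dia_set_def)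

lemma mdia_leI:
  assumes "\<exists>m. is_least (dia_set x) m" and "sup (mneg x) y = top"
  shows "mdia x \<le> y"
  using is_least_The[OF assms(1)] assms(2) by (simp add: mdia_def is_least_def dia_set_def)

lemma inf_mdia_mbox_le_mdia_inf:
  fixes a b :: "'a::{distrib_lattice, bounded_lattice}"
  assumes mc: "meet_complemented TYPE('a)"
    and box_b: "\<exists>m. is_greatest (box_set b) m"
    and dia_a: "\<exists>m. is_least (dia_set a) m"
    and dia_ab: "\<exists>m. is_least (dia_set (inf a b)) m"
  shows "inf (mdia a) (mbox b) \<le> mdia (inf a b)"
proof -
  let ?d = "mdia (inf a b)" and ?n = "mneg (mbox b)"
  have "inf a (inf (mneg (inf a b)) b) = inf (inf a b) (mneg (inf a b))"
    by (simp add: ac_simps)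
  then have key: "inf (mneg (inf a b)) b \<le> mneg a"
    by (simp add: le_mneg_iff[OF mc] inf_mneg_self[OF mc])
  have "top = inf (sup (mneg (inf a b)) ?d) (sup b ?n)"
    by (simp add: mneg_sup_mdia[OF dia_ab] sup_mneg_mbox[OF box_b])
  also have "\<dots> \<le> sup (inf (mneg (inf a b)) b) (sup ?d ?n)"
    unfolding inf_sup_distrib1 inf_sup_distrib2
    by (intro sup_least) (auto intro: le_supI1 le_supI2 inf.coboundedI1 inf.coboundedI2)
  also have "\<dots> \<le> sup (mneg a) (sup ?d ?n)"
    using key by (rule sup_mono) simp
  finally have "mdia a \<le> sup ?d ?n"
    by (intro mdia_leI[OF dia_a]) (simp add: top_unique)
  then have "inf (mdia a) (mbox b) \<le> inf (sup ?d ?n) (mbox b)"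
    by (rule inf_mono) simp
  also have "\<dots> = sup (inf ?d (mbox b)) (inf ?n (mbox b))"
    by (simp add: inf_sup_distrib2)
  also have "\<dots> \<le> ?d"
    using inf_mneg_self[OF mc, of "mbox b"] by (simp add: inf_commute le_infI1)
  finally show ?thesis .
qed

lemma mbox_sup_le_sup_mbox_mdia:
  fixes a b :: "'a::{distrib_lattice, bounded_lattice}"
  assumes mc: "meet_complemented TYPE('a)"
    and box_a: "\<exists>m. is_greatest (box_set a) m"
    and box_ab: "\<exists>m. is_greatest (box_set (sup a b)) m"
    and dia_b: "\<exists>m. is_least (dia_set b) m"
  shows "mbox (sup a b) \<le> sup (mbox a) (mdia b)"
proof -
  let ?g = "mbox (sup a b)"
  have "inf (inf ?g (mneg b)) (mneg ?g) = inf (inf ?g (mneg ?g)) (mneg b)"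
    by (simp add: ac_simps)
  then have mneg_g: "mneg ?g \<le> mneg (inf ?g (mneg b))"
    by (simp add: le_mneg_iff[OF mc] inf_mneg_self[OF mc])
  have "inf (inf ?g (mneg b)) b = inf ?g (inf b (mneg b))"
    by (simp add: ac_simps)
  then have b_le: "b \<le> mneg (inf ?g (mneg b))"
    by (simp add: le_mneg_iff[OF mc] inf_mneg_self[OF mc])
  have "top = sup (sup a b) (mneg ?g)"
    by (simp add: sup_mneg_mbox[OF box_ab])
  also have "\<dots> \<le> sup a (mneg (inf ?g (mneg b)))"
    using mneg_g b_le by (intro sup_least) (auto intro: le_supI2)
  finally have box_a_ge: "inf ?g (mneg b) \<le> mbox a"
    by (intro le_mboxI[OF box_a]) (simp add: top_unique)
  have "?g = inf ?g (sup (mneg b) (mdia b))"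
    by (simp add: mneg_sup_mdia[OF dia_b])
  also have "\<dots> = sup (inf ?g (mneg b)) (inf ?g (mdia b))"
    by (simp add: inf_sup_distrib1)
  also have "\<dots> \<le> sup (mbox a) (mdia b)"
    using box_a_ge by (rule sup_mono) simp
  finally show ?thesis .
qed

theorem proposition15:
  fixes a b :: "'a::{distrib_lattice, bounded_lattice}"
  assumes "meet_complemented TYPE('a)"
    and "\<forall>x::'a. \<exists>m. is_greatest (box_set x) m"
    and "\<forall>x::'a. \<exists>m. is_least (dia_set x) m"
  shows "inf (mdia a) (mbox b) \<le> mdia (inf a b) \<and>
         mbox (sup a b) \<le> sup (mbox a) (mdia b)"
proof
  show "inf (mdia a) (mbox b) \<le> mdia (inf a b)"
    using assms by (intro inf_mdia_mbox_le_mdia_inf) simp_all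
  show "mbox (sup a b) \<le> sup (mbox a) (mdia b)"
    using assms by (intro mbox_sup_le_sup_mbox_mdia) simp_all
qed

end
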